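(* Let $K, C_K\subset\mathbb{R}^n$ be convex bodies such that $C_K$ is a completion of $K$, and for $\lambda\in[0,1]$ let $K_\lambda:=\lambda K+(1-\lambda)C_K$. Then for all $\lambda\in[0,1]$, \[ D(K_\lambda)=D(K)\quad\text{and}\quad w(K_\lambda)=\lambda w(K)+(1-\lambda)w(C_K). \]
   Context: A convex body is a compact convex subset of $\mathbb{R}^n$. $D(\cdot)$ denotes diameter (largest distance between two points) and $w(\cdot)$ the width (smallest distance between two distinct parallel supporting hyperplanes). $A+B=\{a+b: a\in A, b\in B\}$ is the Minkowski sum and $\lambda A=\{\lambda a: a\in A\}$. A completion of $K$ is a convex body $C_K$ with $K\subseteq C_K$ and $D(K)=D(C_K)=w(C_K)$. *)

theory Defs
  imports "HOL-Analysis.Analysis"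
begin

definition convex_body :: "'a::euclidean_space set \<Rightarrow> bool" where
  "convex_body K \<longleftrightarrow> compact K \<and> convex K \<and> K \<noteq> {}"

definition width :: "'a::euclidean_space set \<Rightarrow> real" where
  "width K = (INF u \<in> sphere 0 1. (SUP x\<in>K. u \<bullet> x) - (INF x\<in>K. u \<bullet> x))"

definition mink_comb :: "real \<Rightarrow> 'a::real_vector set \<Rightarrow> real \<Rightarrow> 'a set \<Rightarrow> 'a set" where
  "mink_comb l A m B = {l *\<^sub>R a + m *\<^sub>R b | a b. a \<in> A \<and> b \<in> B}"

definition completion :: "'a::euclidean_space set \<Rightarrow> 'a set \<Rightarrow> bool" where
  "completion K C \<longleftrightarrow> convex_body C \<and> K \<subseteq> C \<and> diameter K = diameter C \<and> diameter C = width C"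

end

theory Submission
  imports Defs
begin

text \<open>Both quantities are read off the breadth b(S,u) = h(S,u) + h(S,-u) over unit vectors u,
  h being the support function: the width is its infimum and the diameter its maximum.
  Support functions, hence breadths, are additive and positively homogeneous under Minkowski
  combinations. A completion C has constant breadth D = D(K), so the breadth of
  \<lambda>K + (1-\<lambda>)C in direction u is \<lambda> b(K,u) + (1-\<lambda>) D, an increasing affine function of
  b(K,u). Taking infimum and supremum over u gives the width formula and the diameter
  \<lambda> D(K) + (1-\<lambda>) D = D(K).\<close>

lemma cINF_affine:
  fixes f :: "'b \<Rightarrow> real"
  assumes "bdd_below (f ` A)" "A \<noteq> {}" "0 \<le> a"
  shows "(INF x\<in>A. a * f x + c) = a * (INF x\<in>A. f x) + c"
proof -
  have "mono (\<lambda>t::real. a * t + c)"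
    using assms(3) by (intro monoI) (simp add: mult_left_mono)
  moreover have "continuous (at_right (Inf (f ` A))) (\<lambda>t::real. a * t + c)"
    by (intro continuous_intros)
  ultimately show ?thesis
    using continuous_at_Inf_mono[of "\<lambda>t. a * t + c" "f ` A"] assms by (simp add: image_image)
qed

lemma cSUP_affine:
  fixes f :: "'b \<Rightarrow> real"
  assumes "bdd_above (f ` A)" "A \<noteq> {}" "0 \<le> a"
  shows "(SUP x\<in>A. a * f x + c) = a * (SUP x\<in>A. f x) + c"
proof -
  have "mono (\<lambda>t::real. a * t + c)"
    using assms(3) by (intro monoI) (simp add: mult_left_mono)
  moreover have "continuous (at_left (Sup (f ` A))) (\<lambda>t::real. a * t + c)"
    by (intro continuous_intros)
  ultimately show ?thesis
    using continuous_at_Sup_mono[of "\<lambda>t. a * t + c" "f ` A"] assms by (simp add: image_image)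
qed

lemma exists_unit_inner_eq_norm:
  fixes v :: "'a::{real_inner, perfect_space}"
  obtains u where "u \<in> sphere 0 1" "u \<bullet> v = norm v"
proof (cases "v = 0")
  case True
  obtain u :: 'a where "norm u = 1" using vector_choose_size[of 1] by auto
  with True show ?thesis using that by simp
next
  case False
  then show ?thesis
    using that[of "sgn v"] by (simp add: norm_sgn sgn_div_norm dot_square_norm power2_eq_square)
qed

lemma compact_mink_comb:
  fixes K C :: "'a::real_normed_vector set"
  assumes "compact K" "compact C"
  shows "compact (mink_comb l K m C)"
proof -
  have "mink_comb l K m C = (\<lambda>p. l *\<^sub>R fst p + m *\<^sub>R snd p) ` (K \<times> C)"
    unfolding mink_comb_def by force
  moreover have "continuous_on (K \<times> C) (\<lambda>p. l *\<^sub>R fst p + m *\<^sub>R snd p)"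
    by (intro continuous_intros)
  ultimately show ?thesis
    using compact_continuous_image compact_Times assms by metis
qed

definition support_fun :: "'a::real_inner set \<Rightarrow> 'a \<Rightarrow> real" where
  "support_fun S u = (SUP x\<in>S. u \<bullet> x)"

definition breadth :: "'a::real_inner set \<Rightarrow> 'a \<Rightarrow> real" where
  "breadth S u = support_fun S u + support_fun S (- u)"

lemma support_fun_attained:
  fixes S :: "'a::real_inner set"
  assumes "compact S" "S \<noteq> {}"
  obtains a where "a \<in> S" "support_fun S u = u \<bullet> a" "\<And>x. x \<in> S \<Longrightarrow> u \<bullet> x \<le> u \<bullet> a"
proof -
  have "continuous_on S (\<lambda>x. u \<bullet> x)" by (intro continuous_intros)
  then obtain a where a: "a \<in> S" "\<And>x. x \<in> S \<Longrightarrow> u \<bullet> x \<le> u \<bullet> a"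
    using continuous_attains_sup[OF assms] by blast
  then have "support_fun S u = u \<bullet> a"
    unfolding support_fun_def by (intro cSup_eq_maximum) auto
  with a that show ?thesis by blast
qed

lemma INF_inner_eq_support_fun:
  fixes S :: "'a::real_inner set"
  assumes "compact S" "S \<noteq> {}"
  shows "(INF x\<in>S. u \<bullet> x) = - support_fun S (- u)"
proof -
  obtain a where a: "a \<in> S" "support_fun S (- u) = - u \<bullet> a"
    and le: "\<And>x. x \<in> S \<Longrightarrow> - u \<bullet> x \<le> - u \<bullet> a"
    using support_fun_attained[OF assms] by blast
  have "(INF x\<in>S. u \<bullet> x) = u \<bullet> a"
    using a(1) le by (intro cInf_eq_minimum) auto
  with a(2) show ?thesis by simp
qed

lemma width_eq_INF_breadth:
  fixes S :: "'a::euclidean_space set"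
  assumes "compact S" "S \<noteq> {}"
  shows "width S = (INF u\<in>sphere 0 1. breadth S u)"
  unfolding width_def breadth_def support_fun_def[symmetric] INF_inner_eq_support_fun[OF assms]
  by simp

lemma support_fun_mink_comb:
  fixes K C :: "'a::real_inner set"
  assumes "compact K" "K \<noteq> {}" "compact C" "C \<noteq> {}" "0 \<le> l" "0 \<le> m"
  shows "support_fun (mink_comb l K m C) u = l * support_fun K u + m * support_fun C u"
proof -
  obtain a where a: "a \<in> K" "support_fun K u = u \<bullet> a" "\<And>x. x \<in> K \<Longrightarrow> u \<bullet> x \<le> u \<bullet> a"
    using support_fun_attained[OF assms(1,2)] by blast
  obtain c where c: "c \<in> C" "support_fun C u = u \<bullet> c" "\<And>x. x \<in> C \<Longrightarrow> u \<bullet> x \<le> u \<bullet> c"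
    using support_fun_attained[OF assms(3,4)] by blast
  have "support_fun (mink_comb l K m C) u = u \<bullet> (l *\<^sub>R a + m *\<^sub>R c)"
    unfolding support_fun_def
  proof (rule cSup_eq_maximum)
    show "u \<bullet> (l *\<^sub>R a + m *\<^sub>R c) \<in> (\<lambda>z. u \<bullet> z) ` mink_comb l K m C"
      unfolding mink_comb_def using a(1) c(1) by blast
  next
    fix t assume "t \<in> (\<lambda>z. u \<bullet> z) ` mink_comb l K m C"
    then obtain x y where t: "t = l * (u \<bullet> x) + m * (u \<bullet> y)" "x \<in> K" "y \<in> C"
      unfolding mink_comb_def by (auto simp: inner_add_right)
    have "l * (u \<bullet> x) + m * (u \<bullet> y) \<le> l * (u \<bullet> a) + m * (u \<bullet> c)"
      using a(3)[OF t(2)] c(3)[OF t(3)] assms(5,6) by (intro add_mono mult_left_mono)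
    with t(1) show "t \<le> u \<bullet> (l *\<^sub>R a + m *\<^sub>R c)" by (simp add: inner_add_right)
  qed
  with a(2) c(2) show ?thesis by (simp add: inner_add_right)
qed

lemma breadth_mink_comb:
  fixes K C :: "'a::real_inner set"
  assumes "compact K" "K \<noteq> {}" "compact C" "C \<noteq> {}" "0 \<le> l" "0 \<le> m"
  shows "breadth (mink_comb l K m C) u = l * breadth K u + m * breadth C u"
  unfolding breadth_def support_fun_mink_comb[OF assms] by (simp add: algebra_simps)

lemma inner_diff_le_breadth:
  fixes S :: "'a::real_inner set"
  assumes "compact S" "x \<in> S" "y \<in> S"
  shows "u \<bullet> (x - y) \<le> breadth S u"
proof -
  obtain a where "support_fun S u = u \<bullet> a" "u \<bullet> x \<le> u \<bullet> a"
    using support_fun_attained[of S u] assms by blast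
  moreover obtain b where "support_fun S (- u) = - u \<bullet> b" "- u \<bullet> y \<le> - u \<bullet> b"
    using support_fun_attained[of S "- u"] assms by blast
  ultimately show ?thesis
    unfolding breadth_def by (simp add: inner_diff_right)
qed

lemma breadth_nonneg:
  fixes S :: "'a::real_inner set"
  assumes "compact S" "S \<noteq> {}"
  shows "0 \<le> breadth S u"
  using inner_diff_le_breadth[OF assms(1), of _ _ u] assms(2) by force

lemma bdd_below_breadth:
  fixes S :: "'a::real_inner set"
  assumes "compact S" "S \<noteq> {}"
  shows "bdd_below (breadth S ` A)"
  using breadth_nonneg[OF assms] by (intro bdd_belowI2)

lemma breadth_le_diameter:
  fixes S :: "'a::real_inner set"
  assumes "compact S" "S \<noteq> {}" "u \<in> sphere 0 1"
  shows "breadth S u \<le> diameter S"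
proof -
  obtain a where a: "a \<in> S" "support_fun S u = u \<bullet> a"
    using support_fun_attained[OF assms(1,2)] by blast
  obtain b where b: "b \<in> S" "support_fun S (- u) = - u \<bullet> b"
    using support_fun_attained[OF assms(1,2)] by blast
  have "breadth S u = u \<bullet> (a - b)"
    unfolding breadth_def a(2) b(2) by (simp add: inner_diff_right)
  also have "\<dots> \<le> norm u * norm (a - b)" by (rule norm_cauchy_schwarz)
  also have "\<dots> = dist a b" using assms(3) by (simp add: dist_norm)
  also have "\<dots> \<le> diameter S"
    using diameter_bounded_bound[OF compact_imp_bounded[OF assms(1)] a(1) b(1)] .
  finally show ?thesis .
qed

lemma bdd_above_breadth_sphere:
  fixes S :: "'a::real_inner set"
  assumes "compact S" "S \<noteq> {}"
  shows "bdd_above (breadth S ` sphere 0 1)"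
  using breadth_le_diameter[OF assms] by (intro bdd_aboveI2)

lemma diameter_eq_SUP_breadth:
  fixes S :: "'a::{real_inner, perfect_space} set"
  assumes "compact S" "S \<noteq> {}"
  shows "diameter S = (SUP u\<in>sphere 0 1. breadth S u)"
proof -
  obtain x y where xy: "x \<in> S" "y \<in> S" "dist x y = diameter S"
    using diameter_compact_attained[OF assms] by blast
  obtain u where u: "u \<in> sphere 0 1" "u \<bullet> (x - y) = norm (x - y)"
    using exists_unit_inner_eq_norm by blast
  have "diameter S \<le> breadth S u"
    using inner_diff_le_breadth[OF assms(1) xy(1,2), of u] u(2) xy(3) by (simp add: dist_norm)
  then have "breadth S u = diameter S"
    using breadth_le_diameter[OF assms u(1)] by simp
  then have "diameter S \<in> breadth S ` sphere 0 1"
    using u(1) by (metis image_eqI)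
  then show ?thesis
    using breadth_le_diameter[OF assms] by (intro cSup_eq_maximum[symmetric]) auto
qed

lemma breadth_completion:
  fixes K C :: "'a::euclidean_space set"
  assumes "completion K C" "u \<in> sphere 0 1"
  shows "breadth C u = diameter K"
proof -
  have C: "compact C" "C \<noteq> {}" using assms(1) by (auto simp: completion_def convex_body_def)
  have "width C \<le> breadth C u"
    unfolding width_eq_INF_breadth[OF C] using bdd_below_breadth[OF C] assms(2) by (rule cINF_lower)
  with breadth_le_diameter[OF C assms(2)] assms(1) show ?thesis
    by (simp add: completion_def)
qed

theorem lemma2p2:
  fixes K CK :: "'a::euclidean_space set" and l :: real
  assumes "convex_body K" and "convex_body CK" and "completion K CK"
    and "0 \<le> l" and "l \<le> 1"
  shows "diameter (mink_comb l K (1 - l) CK) = diameter K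
    \<and> width (mink_comb l K (1 - l) CK) = l * width K + (1 - l) * width CK"
proof -
  define M where "M = mink_comb l K (1 - l) CK"
  have K: "compact K" "K \<noteq> {}" and C: "compact CK" "CK \<noteq> {}"
    using assms(1,2) by (auto simp: convex_body_def)
  have M: "compact M" "M \<noteq> {}"
    using compact_mink_comb[OF K(1) C(1)] K(2) C(2) unfolding M_def mink_comb_def by auto
  have breadth_M: "breadth M u = l * breadth K u + (1 - l) * diameter K" if "u \<in> sphere 0 1" for u
    using breadth_mink_comb[OF K C assms(4), of "1 - l"] breadth_completion[OF assms(3) that]
      assms(5) unfolding M_def by simp
  have "diameter M = (SUP u\<in>sphere 0 1. l * breadth K u + (1 - l) * diameter K)"
    using diameter_eq_SUP_breadth[OF M] breadth_M by simp
  also have "\<dots> = l * diameter K + (1 - l) * diameter K"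
    using cSUP_affine[OF bdd_above_breadth_sphere[OF K] _ assms(4)] diameter_eq_SUP_breadth[OF K]
    by simp
  also have "\<dots> = diameter K" by (simp add: algebra_simps)
  finally have diameter_M: "diameter M = diameter K" .
  have "width M = (INF u\<in>sphere 0 1. l * breadth K u + (1 - l) * diameter K)"
    using width_eq_INF_breadth[OF M] breadth_M by simp
  also have "\<dots> = l * width K + (1 - l) * diameter K"
    using cINF_affine[OF bdd_below_breadth[OF K] _ assms(4)] width_eq_INF_breadth[OF K]
    by simp
  finally have width_M: "width M = l * width K + (1 - l) * diameter K" .
  have width_CK: "width CK = diameter K"
    using assms(3) by (simp add: completion_def)
  show ?thesis
    using diameter_M width_M width_CK unfolding M_def by simp
qed

end
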